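(* Let $L$ be an $S$-Noetherian lattice, where $S$ is a multiplicatively closed subset of $L$ with $1\in S$, $0\notin S$. Then every radical element $a$ of $L$ (i.e., $a=\sqrt a$) such that $t\not\le a$ for all $t\in S$ is the meet of finitely many $S$-prime elements.
   Context: A multiplicative lattice is a complete lattice with a commutative, associative multiplication distributing over arbitrary joins, with $1$ as identity; $L_*$ is the set of compact elements; $(a:b)=\bigvee\{x\mid xb\le a\}$. An element $m$ is principal if $a\wedge mb=m((a:m)\wedge b)$ and $a\vee(b:m)=(am\vee b):m$ for all $a,b$. An $r$-lattice is a modular, principally generated, compactly generated multiplicative lattice with $1$ compact. A multiplicatively closed subset is a nonempty $S\subseteq L_*$ closed under multiplication. An element $a$ is $S$-compact if $sa\le b\le a$ for some compact $b$ and $s\in S$; an $S$-Noetherian lattice is an $r$-lattice in which every element is $S$-compact. $\sqrt a=\bigvee\{x\in L_*\mid x^n\le a\text{ for some }n\in\mathbb{Z}^+\}$. A proper element $p$ with $t\not\le p$ for all $t\in S$ is $S$-prime if there exists $s\in S$ such that for all $a,b\in L$, $ab\le p$ implies $sa\le p$ or $sb\le p$. *)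

theory Defs
  imports Main
begin

class multiplicative_lattice = complete_lattice + comm_monoid_mult +
  assumes mult_Sup_distrib: "a * Sup B = Sup ((\<lambda>b. a * b) ` B)"
  assumes one_is_top: "1 = top"

context complete_lattice
begin
definition compact :: "'a \<Rightarrow> bool" where
  "compact x \<longleftrightarrow> (\<forall>B. x \<le> Sup B \<longrightarrow> (\<exists>F\<subseteq>B. finite F \<and> x \<le> Sup F))"

end

context multiplicative_lattice
begin
definition res :: "'a \<Rightarrow> 'a \<Rightarrow> 'a" where
  "res a b = Sup {x. x * b \<le> a}"

definition principal :: "'a \<Rightarrow> bool" where
  "principal m \<longleftrightarrow> (\<forall>a b. inf a (m * b) = m * inf (res a m) b
                        \<and> sup a (res b m) = res (sup (a * m) b) m)"

end

class r_lattice = multiplicative_lattice +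
  assumes modular: "a \<le> c \<Longrightarrow> sup a (inf b c) = inf (sup a b) c"
  assumes principally_generated: "x = Sup {m. principal m \<and> m \<le> x}"
  assumes compactly_generated: "x = Sup {c. compact c \<and> c \<le> x}"
  assumes one_compact: "compact 1"

definition mult_closed :: "'a::multiplicative_lattice set \<Rightarrow> bool" where
  "mult_closed S \<longleftrightarrow> S \<noteq> {} \<and> (\<forall>s\<in>S. compact s) \<and> (\<forall>s\<in>S. \<forall>t\<in>S. s * t \<in> S)"

definition S_compact :: "'a::multiplicative_lattice set \<Rightarrow> 'a \<Rightarrow> bool" where
  "S_compact S a \<longleftrightarrow> (\<exists>s\<in>S. \<exists>b. compact b \<and> s * a \<le> b \<and> b \<le> a)"

definition S_Noetherian :: "'a::r_lattice set \<Rightarrow> bool" where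
  "S_Noetherian S \<longleftrightarrow> (\<forall>a. S_compact S a)"

definition rad :: "'a::multiplicative_lattice \<Rightarrow> 'a" where
  "rad a = Sup {x. compact x \<and> (\<exists>n::nat. n \<ge> 1 \<and> x ^ n \<le> a)}"

definition S_prime :: "'a::multiplicative_lattice set \<Rightarrow> 'a \<Rightarrow> bool" where
  "S_prime S p \<longleftrightarrow> p \<noteq> top \<and> (\<forall>t\<in>S. \<not> t \<le> p) \<and>
     (\<exists>s\<in>S. \<forall>a b. a * b \<le> p \<longrightarrow> s * a \<le> p \<or> s * b \<le> p)"

end

theory Submission
  imports Defs
begin

text \<open>
Call \<open>c\<close> S-saturated if \<open>(c : s) \<le> c\<close> for all \<open>s \<in> S\<close>. In an S-Noetherian lattice the
S-saturated elements satisfy the ascending chain condition, so every semiprime S-saturated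
element \<open>c\<close> missing \<open>S\<close> is a finite meet of primes missing \<open>S\<close>: if \<open>xy \<le> c\<close> with neither
\<open>x \<le> c\<close> nor \<open>y \<le> c\<close>, then \<open>c = c\<^sub>1 \<sqinter> (c : c\<^sub>1)\<close> for \<open>c\<^sub>1 = (c : y)\<close>, and both meetands are
again semiprime, S-saturated, missing \<open>S\<close> and strictly above \<open>c\<close>.

The radical element \<open>a\<close> need not be S-saturated, but S-compactness of
\<open>\<Squnion>{(a : t) | t \<in> S}\<close> and multiplicative closure of \<open>S\<close> yield one \<open>s \<in> S\<close> with
\<open>(a : t) \<le> (a : s)\<close> for all \<open>t \<in> S\<close>, so \<open>c = (a : s)\<close> is S-saturated.
Write \<open>c = \<Sqinter>P\<close> with \<open>P\<close> prime and put \<open>J = (a : c)\<close>. Semiprimeness of \<open>a\<close> gives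
\<open>a = c \<sqinter> J = \<Sqinter>{p \<sqinter> J | p \<in> P}\<close>, and every \<open>p \<sqinter> J\<close> is S-prime with witness \<open>s\<close>,
as \<open>s \<le> J\<close>.
\<close>

context multiplicative_lattice
begin

lemma mult_right_isotone: "b \<le> c \<Longrightarrow> a * b \<le> a * c"
proof -
  assume "b \<le> c"
  have "a * sup b c = sup (a * b) (a * c)" using mult_Sup_distrib[of a "{b, c}"] by simp
  then show "a * b \<le> a * c" using \<open>b \<le> c\<close> by (metis sup_absorb2 sup_ge1)
qed

lemma mult_isotone: "a \<le> b \<Longrightarrow> c \<le> d \<Longrightarrow> a * c \<le> b * d"
  by (metis mult_right_isotone mult.commute order_trans)

lemma mult_le_right_factor: "a * b \<le> b"
proof -
  have "a \<le> 1" by (simp add: one_is_top)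
  then show ?thesis using mult_isotone[of a 1 b b] by simp
qed

lemma mult_le_left_factor: "a * b \<le> a"
  by (metis mult_le_right_factor mult.commute)

lemma le_res_iff: "x \<le> res a b \<longleftrightarrow> x * b \<le> a"
proof
  have "res a b * b = Sup ((\<lambda>y. b * y) ` {x. x * b \<le> a})"
    by (simp add: res_def mult.commute[of _ b] mult_Sup_distrib)
  also have "\<dots> \<le> a" by (auto simp: mult.commute intro: Sup_least)
  finally have "res a b * b \<le> a" .
  then show "x \<le> res a b \<Longrightarrow> x * b \<le> a" by (metis mult_isotone order_refl order_trans)
qed (auto simp: res_def intro: Sup_upper)

lemma le_res: "a \<le> res a b"
  by (simp add: le_res_iff mult_le_left_factor)

lemma res_mono: "a \<le> a' \<Longrightarrow> res a b \<le> res a' b"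
  using le_res_iff order_trans by blast

lemma res_res: "res (res a b) d = res a (b * d)"
proof -
  have "x \<le> res (res a b) d \<longleftrightarrow> x \<le> res a (b * d)" for x
    by (simp add: le_res_iff mult.assoc mult.commute mult.left_commute)
  then show ?thesis by (meson order.antisym order_refl)
qed

lemma res_le_res_mult: "res a u \<le> res a (u * v)"
  by (metis le_res_iff mult.assoc mult_le_left_factor order_refl order_trans)

definition semiprime :: "'a \<Rightarrow> bool" where
  "semiprime c \<longleftrightarrow> (\<forall>z. z * z \<le> c \<longrightarrow> z \<le> c)"

definition prime_element :: "'a \<Rightarrow> bool" where
  "prime_element p \<longleftrightarrow> (\<forall>x y. x * y \<le> p \<longrightarrow> x \<le> p \<or> y \<le> p)"

definition S_saturated :: "'a set \<Rightarrow> 'a \<Rightarrow> bool" where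
  "S_saturated S c \<longleftrightarrow> (\<forall>s\<in>S. res c s \<le> c)"

lemma semiprime_res:
  assumes "semiprime c" shows "semiprime (res c y)"
  unfolding semiprime_def
proof (intro allI impI)
  fix z assume "z * z \<le> res c y"
  have "(z * y) * (z * y) = (z * z) * (y * y)" by (simp add: ac_simps)
  also have "\<dots> \<le> z * z * y" by (intro mult_right_isotone mult_le_left_factor)
  also have "\<dots> \<le> c" using \<open>z * z \<le> res c y\<close> by (simp add: le_res_iff)
  finally have "z * y \<le> c" using assms unfolding semiprime_def by blast
  then show "z \<le> res c y" by (simp add: le_res_iff)
qed

lemma semiprime_inf_res:
  assumes "semiprime a" "a \<le> b" shows "inf b (res a b) = a"
proof (rule order.antisym)
  have "inf b (res a b) * inf b (res a b) \<le> inf b (res a b) * b"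
    by (simp add: mult_right_isotone)
  also have "\<dots> \<le> a" by (simp add: le_res_iff[symmetric])
  finally show "inf b (res a b) \<le> a" using assms(1) unfolding semiprime_def by blast
qed (simp add: assms(2) le_res)

lemma S_saturated_res:
  assumes "S_saturated S c" shows "S_saturated S (res c y)"
  unfolding S_saturated_def
proof
  fix s assume "s \<in> S"
  have "res (res c y) s = res (res c s) y" by (simp add: res_res mult.commute)
  also have "\<dots> \<le> res c y" using assms \<open>s \<in> S\<close> by (simp add: S_saturated_def res_mono)
  finally show "res (res c y) s \<le> res c y" .
qed

lemma S_saturated_res_disjoint:
  assumes "S_saturated S c" "\<not> y \<le> c" "t \<in> S" shows "\<not> t \<le> res c y"
proof
  assume "t \<le> res c y"
  then have "y \<le> res c t" by (simp add: le_res_iff mult.commute)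
  also have "\<dots> \<le> c" using assms(1,3) by (simp add: S_saturated_def)
  finally show False using assms(2) by blast
qed

end

lemma S_prime_inf:
  fixes p :: "'a::multiplicative_lattice"
  assumes "prime_element p" "\<forall>t\<in>S. \<not> t \<le> p" "s \<in> S" "s \<le> J"
  shows "S_prime S (inf p J)"
proof -
  have "s * x \<le> inf p J" if "x \<le> p" for x
    using that assms(4) mult_le_left_factor mult_le_right_factor order_trans by (metis le_inf_iff)
  then have "\<forall>x y. x * y \<le> inf p J \<longrightarrow> s * x \<le> inf p J \<or> s * y \<le> inf p J"
    using assms(1) unfolding prime_element_def by (meson le_inf_iff)
  moreover have "inf p J \<noteq> top" using assms(2,3) by auto
  ultimately show ?thesis using assms(2,3) by (auto simp: S_prime_def)
qed

lemma mult_closed_residuals_bounded: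
  fixes S :: "'a::multiplicative_lattice set"
  assumes "mult_closed S" "finite K" "K \<subseteq> S"
  shows "\<exists>t\<in>S. \<forall>k\<in>K. res a k \<le> res a t"
  using assms(2,3)
proof (induction K rule: finite_induct)
  case empty then show ?case using assms(1) by (auto simp: mult_closed_def)
next
  case (insert k K)
  then obtain t where t: "t \<in> S" "\<forall>j\<in>K. res a j \<le> res a t" by blast
  have "t * k \<in> S" using assms(1) t(1) insert.prems by (simp add: mult_closed_def)
  moreover have "res a k \<le> res a (t * k)" using res_le_res_mult[of a k t] by (simp add: mult.commute)
  moreover have "res a t \<le> res a (t * k)" by (rule res_le_res_mult)
  ultimately show ?case using t(2) order_trans by blast
qed

lemma S_compact_SupE:
  fixes A :: "'a::multiplicative_lattice set"
  assumes "S_compact S (Sup A)"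
  obtains s F where "s \<in> S" "F \<subseteq> A" "finite F" "s * Sup A \<le> Sup F"
proof -
  obtain s b where sb: "s \<in> S" "compact b" "s * Sup A \<le> b" "b \<le> Sup A"
    using assms by (auto simp: S_compact_def)
  then obtain F where "F \<subseteq> A" "finite F" "b \<le> Sup F" by (auto simp: compact_def)
  then show ?thesis using that sb(1,3) order_trans by blast
qed

lemma radical_semiprime:
  fixes a :: "'a::r_lattice"
  assumes "rad a = a" shows "semiprime a"
  unfolding semiprime_def
proof (intro allI impI)
  fix z assume "z * z \<le> a"
  have "w \<le> a" if "compact w" "w \<le> z" for w
  proof -
    have "w ^ 2 \<le> a"
      using mult_isotone[OF \<open>w \<le> z\<close> \<open>w \<le> z\<close>] \<open>z * z \<le> a\<close> by (simp add: power2_eq_square)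
    then have "w \<le> rad a" using \<open>compact w\<close> unfolding rad_def by (auto intro!: Sup_upper exI[of _ 2])
    then show ?thesis using assms by simp
  qed
  then show "z \<le> a" by (subst compactly_generated) (auto intro: Sup_least)
qed

lemma wf_S_saturated_less:
  fixes S :: "'a::r_lattice set"
  assumes "S_Noetherian S"
  shows "wf {(y, x). S_saturated S x \<and> S_saturated S y \<and> x < y}"
proof (rule ccontr)
  assume "\<not> ?thesis"
  then obtain f where f: "\<And>i. f i < f (Suc i)" "\<And>i. S_saturated S (f i)"
    unfolding wf_iff_no_infinite_down_chain by auto
  have mono_f: "f i \<le> f j" if "i \<le> j" for i j
    using lift_Suc_mono_le[of f] f(1) less_imp_le that by metis
  obtain s F where sF: "s \<in> S" "F \<subseteq> range f" "finite F" "s * Sup (range f) \<le> Sup F"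
    using assms S_compact_SupE unfolding S_Noetherian_def by metis
  obtain K where "finite K" "F = f ` K" using finite_subset_image[OF sF(3,2)] by blast
  then obtain k where "\<forall>i\<in>K. i \<le> k" using finite_nat_set_iff_bounded_le by blast
  then have "Sup F \<le> f k" using \<open>F = f ` K\<close> mono_f by (auto intro: Sup_least)
  then have "Sup (range f) \<le> res (f k) s"
    using sF(4) by (simp add: le_res_iff mult.commute order_trans)
  also have "\<dots> \<le> f k" using f(2) sF(1) by (simp add: S_saturated_def)
  finally have "f (Suc k) \<le> f k" by (meson Sup_upper rangeI order_trans)
  with f(1)[of k] show False by simp
qed

lemma S_Noetherian_residual_bound:
  fixes S :: "'a::r_lattice set"
  assumes "mult_closed S" "S_Noetherian S"
  obtains s where "s \<in> S" "\<And>t. t \<in> S \<Longrightarrow> res a t \<le> res a s"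
proof -
  obtain s0 F where s0F: "s0 \<in> S" "F \<subseteq> (\<lambda>t. res a t) ` S" "finite F"
      "s0 * Sup ((\<lambda>t. res a t) ` S) \<le> Sup F"
    using assms(2) S_compact_SupE unfolding S_Noetherian_def by metis
  obtain K where "K \<subseteq> S" "finite K" "F = (\<lambda>t. res a t) ` K"
    using finite_subset_image[OF s0F(3,2)] by blast
  then obtain t where t: "t \<in> S" "Sup F \<le> res a t"
    using mult_closed_residuals_bounded[OF assms(1)] by (metis SUP_least)
  have "s0 * Sup ((\<lambda>t. res a t) ` S) \<le> res a t" using s0F(4) t(2) by (rule order_trans)
  then have "Sup ((\<lambda>t. res a t) ` S) \<le> res a (t * s0)" by (metis le_res_iff mult.commute res_res)
  moreover have "t * s0 \<in> S" using assms(1) t(1) s0F(1) by (simp add: mult_closed_def)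
  ultimately show ?thesis using that by (meson SUP_le_iff)
qed

lemma S_saturated_eq_Inf_prime_elements:
  fixes S :: "'a::r_lattice set"
  assumes "S_Noetherian S"
  shows "S_saturated S c \<Longrightarrow> semiprime c \<Longrightarrow> \<forall>t\<in>S. \<not> t \<le> c \<Longrightarrow>
    \<exists>P. finite P \<and> (\<forall>p\<in>P. prime_element p \<and> (\<forall>t\<in>S. \<not> t \<le> p)) \<and> c = Inf P"
proof (induction c rule: wf_induct_rule[OF wf_S_saturated_less[OF assms]])
  case (1 c)
  note sat = "1.prems"(1) and semi = "1.prems"(2)
  have IH: "\<exists>P. finite P \<and> (\<forall>p\<in>P. prime_element p \<and> (\<forall>t\<in>S. \<not> t \<le> p)) \<and> d = Inf P"
    if "c < d" "S_saturated S d" "semiprime d" "\<forall>t\<in>S. \<not> t \<le> d" for d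
    using "1.IH"[of d] sat that by blast
  show ?case
  proof (cases "prime_element c")
    case True
    then show ?thesis using "1.prems" by (intro exI[of _ "{c}"]) auto
  next
    case False
    then obtain x y where xy: "x * y \<le> c" "\<not> x \<le> c" "\<not> y \<le> c"
      unfolding prime_element_def by blast
    define c\<^sub>1 where "c\<^sub>1 = res c y"
    define c\<^sub>2 where "c\<^sub>2 = res c c\<^sub>1"
    have "x \<le> c\<^sub>1" using xy(1) by (simp add: c\<^sub>1_def le_res_iff)
    have "y \<le> c\<^sub>2" unfolding c\<^sub>2_def c\<^sub>1_def by (metis le_res_iff mult.commute order_refl)
    have not_le: "\<not> c\<^sub>1 \<le> c" "\<not> c\<^sub>2 \<le> c"
      using xy(2,3) \<open>x \<le> c\<^sub>1\<close> \<open>y \<le> c\<^sub>2\<close> order_trans by blast+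
    have "c \<le> c\<^sub>1" "c \<le> c\<^sub>2" by (simp_all add: c\<^sub>1_def c\<^sub>2_def le_res)
    have c\<^sub>1: "c < c\<^sub>1" "S_saturated S c\<^sub>1" "semiprime c\<^sub>1" "\<forall>t\<in>S. \<not> t \<le> c\<^sub>1"
      using \<open>c \<le> c\<^sub>1\<close> not_le(1) sat semi S_saturated_res_disjoint[OF sat] xy(3)
      by (simp_all add: c\<^sub>1_def less_le_not_le S_saturated_res semiprime_res)
    have c\<^sub>2: "c < c\<^sub>2" "S_saturated S c\<^sub>2" "semiprime c\<^sub>2" "\<forall>t\<in>S. \<not> t \<le> c\<^sub>2"
      using \<open>c \<le> c\<^sub>2\<close> not_le sat semi S_saturated_res_disjoint[OF sat]
      by (simp_all add: c\<^sub>2_def less_le_not_le S_saturated_res semiprime_res)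
    obtain P\<^sub>1 where
      "finite P\<^sub>1" "\<forall>p\<in>P\<^sub>1. prime_element p \<and> (\<forall>t\<in>S. \<not> t \<le> p)" "c\<^sub>1 = Inf P\<^sub>1"
      using IH[OF c\<^sub>1] by blast
    moreover obtain P\<^sub>2 where
      "finite P\<^sub>2" "\<forall>p\<in>P\<^sub>2. prime_element p \<and> (\<forall>t\<in>S. \<not> t \<le> p)" "c\<^sub>2 = Inf P\<^sub>2"
      using IH[OF c\<^sub>2] by blast
    moreover have "c = inf c\<^sub>1 c\<^sub>2"
      using semiprime_inf_res[OF semi \<open>c \<le> c\<^sub>1\<close>] by (simp add: c\<^sub>2_def)
    ultimately show ?thesis by (intro exI[of _ "P\<^sub>1 \<union> P\<^sub>2"]) (auto simp: Inf_union_distrib)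
  qed
qed

theorem mainTheorem11:
  fixes S :: "'a::r_lattice set" and a :: 'a
  assumes "mult_closed S" and "S_Noetherian S"
    and "1 \<in> S" and "bot \<notin> S"
    and "rad a = a" and "\<forall>t\<in>S. \<not> t \<le> a"
  shows "\<exists>P. finite P \<and> (\<forall>p\<in>P. S_prime S p) \<and> a = Inf P"
proof -
  have semiprime_a: "semiprime a" using assms(5) by (rule radical_semiprime)
  obtain s where s: "s \<in> S" "\<And>t. t \<in> S \<Longrightarrow> res a t \<le> res a s"
    using S_Noetherian_residual_bound[OF assms(1,2)] by metis
  define c where "c = res a s"
  have "S_saturated S c" "semiprime c"
    using s assms(1) semiprime_a
    by (simp_all add: c_def S_saturated_def res_res mult_closed_def semiprime_res)
  moreover have "\<forall>t\<in>S. \<not> t \<le> c"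
    using assms(1,6) s(1) by (auto simp: c_def le_res_iff mult_closed_def)
  ultimately obtain P where P: "finite P" "\<forall>p\<in>P. prime_element p \<and> (\<forall>t\<in>S. \<not> t \<le> p)" "c = Inf P"
    using S_saturated_eq_Inf_prime_elements[OF assms(2)] by blast
  define J where "J = res a c"
  have "P \<noteq> {}" using P(3) s(1) \<open>\<forall>t\<in>S. \<not> t \<le> c\<close> by auto
  have "a = inf c J" using semiprime_inf_res[OF semiprime_a le_res] by (simp add: J_def c_def)
  also have "\<dots> = Inf ((\<lambda>p. inf p J) ` P)" using \<open>P \<noteq> {}\<close> by (simp add: P(3) INF_inf_const2)
  finally have "a = Inf ((\<lambda>p. inf p J) ` P)" .
  moreover have "s \<le> J" unfolding J_def c_def by (metis le_res_iff mult.commute order_refl)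
  then have "\<forall>q \<in> (\<lambda>p. inf p J) ` P. S_prime S q" using P(2) s(1) by (auto intro: S_prime_inf)
  ultimately show ?thesis using P(1) by blast
qed

end
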